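(* Let $\mathcal{L}$ be a $d$-colex, let $1\le k<d$, and let $C\subset\mathbb{Z}_{d+1}$ be a set of $k+1$ colors. Then the restriction maps $\pi_C^{(0)},\pi_C^{(1)},\pi_C^{(2)}$ form a morphism of chain complexes from $C_{d-k-1}(\mathcal{L})\xrightarrow{\partial_{d-k-1,d}}C_d(\mathcal{L})\xrightarrow{\partial_{d,k-1}}C_{k-1}(\mathcal{L})$ to $C_{k+1}(\mathcal{L}_C)\xrightarrow{\partial^C_{k+1}}C_k(\mathcal{L}_C)\xrightarrow{\partial^C_k}C_{k-1}(\mathcal{L}_C)$, i.e. $\pi^{(0)}_C\circ\partial_{d,k-1}=\partial^C_k\circ\pi^{(1)}_C$ on $C_d(\mathcal{L})$ and $\pi^{(1)}_C\circ\partial_{d-k-1,d}=\partial^C_{k+1}\circ\pi^{(2)}_C$ on $C_{d-k-1}(\mathcal{L})$.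
   Context: Conventions: all complexes are finite. For a simplicial complex $\mathcal{L}$, $\Delta_k(\mathcal{L})$ is its set of $k$-simplices, and for a simplex $\kappa$, $\Delta_l(\kappa)$ is the set of its $l$-dimensional faces. $C_k(\mathcal{L})$ is the $\mathbb{F}_2$-vector space with basis $\Delta_k(\mathcal{L})$; chains are identified with subsets. $\partial_k\kappa=\sum_{\nu\in\Delta_{k-1}(\kappa)}\nu$. For a $j$-simplex $\kappa$ and $n\ge j$, $\mathrm{Star}_n(\kappa)=\{\nu\in\Delta_n(\mathcal{L}):\kappa\in\Delta_j(\nu)\}$; for $n\le d-j-1$, $\mathrm{Link}_n(\kappa)=\{\nu\in\Delta_n(\mathcal{L}):\nu\cap\kappa=\emptyset\text{ and some }d\text{-simplex contains both}\}$, regarded as an $n$-chain. Generalized boundary maps: for $j\ne n$, $\partial_{j,n}:C_j(\mathcal{L})\to C_n(\mathcal{L})$ is linear with $\partial_{j,n}\kappa=\sum_{\nu\in\Delta_n(\kappa)}\nu$ if $j>n$ and $\partial_{j,n}\kappa=\sum_{\nu\in\mathrm{Star}_n(\kappa)}\nu$ if $j<n$. Colexes: a colorable $0$-ball is a point and a $0$-colex is a finite set of points. For $d\ge1$, a colorable $d$-ball $\mathcal{B}_v$ is the set of $d$-simplices $\{v*\delta:\delta\in\Delta_{d-1}(K)\}$ (where $v*\delta$ is the simplex spanned by $v$ and the vertices of $\delta$) for a $(d-1)$-colex $K$ homeomorphic to the $(d-1)$-sphere and a vertex $v\notin K$; its boundary is $\partial\mathcal{B}_v=K$. For $d\ge1$,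 a $d$-colex (without boundary) $\mathcal{L}$ is a homogeneous simplicial $d$-complex which is a finite union of colorable $d$-balls (sharing no $d$-simplex) glued along their boundaries so that every $(d-1)$-simplex lies in the boundary of exactly two distinct balls, and whose vertices are $(d+1)$-colorable: there is $\mathrm{col}:\Delta_0(\mathcal{L})\to\mathbb{Z}_{d+1}=\{0,\dots,d\}$ assigning distinct colors to the endpoints of every edge. Standing structure: for every vertex $v$, the set of $d$-simplices containing $v$ is the colorable $d$-ball centered at $v$. For a simplex or chain $\alpha$, $\mathrm{col}(\alpha)$ is the set of colors of its vertices. Restricted lattice: for $|C|=k+1$, $\mathcal{L}_C$ is the cell $(k+1)$-complex whose $i$-cells ($0\le i\le k$) are the $i$-simplices $\iota$ of $\mathcal{L}$ with $\mathrm{col}(\iota)\subseteq C$, and whose $(k+1)$-cells are symbols $\Xi(\delta)$, one for each $(d-k-1)$-simplex $\delta$ of $\mathcal{L}$ with $\mathrm{col}(\delta)=\mathbb{Z}_{d+1}\setminus C$. $C_i(\mathcal{L}_C)$ is the $\mathbb{F}_2$-space on its $i$-cells; $\partial_i^C=\partial_i$ on $C_i(\mathcal{L}_C)$ for $1\le i\le k$, and $\partial^C_{k+1}\Xi(\delta)=\mathrm{Link}_k(\delta)$. Restriction maps (linear, defined on basis elements): $\pi^{(0)}_C:C_{k-1}(\mathcal{L})\to C_{k-1}(\mathcal{L}_C)$, $\pi^{(0)}_C(\mu)=\mu$ if $\mathrm{col}(\mu)\subset C$ and $0$ otherwise; $\pi^{(1)}_C:C_d(\mathcal{L})\to C_k(\mathcal{L}_C)$,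 $\pi^{(1)}_C(\delta)=\delta|_C$, the unique $k$-face of the $d$-simplex $\delta$ with color set $C$; $\pi^{(2)}_C:C_{d-k-1}(\mathcal{L})\to C_{k+1}(\mathcal{L}_C)$, $\pi^{(2)}_C(\nu)=\Xi(\nu)$ if $\mathrm{col}(\nu)=\mathbb{Z}_{d+1}\setminus C$ and $0$ otherwise. *)

theory Defs
  imports "HOL-Analysis.Analysis"
begin

text \<open>A homogeneous simplicial complex is represented by the set K of its top-dimensional
simplices (facets), each a finite vertex set; its simplices are all nonempty subsets of facets.
Chains over F_2 are identified with (finite) sets of cells; F_2-linear extensions of maps given
on basis elements are computed by mod-2 counting.\<close>

definition simplices :: "'v set set \<Rightarrow> nat \<Rightarrow> 'v set set" where
  "simplices K k = {s. card s = k + 1 \<and> (\<exists>f\<in>K. s \<subseteq> f)}"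

definition faces :: "nat \<Rightarrow> 'v set \<Rightarrow> 'v set set" where
  "faces l s = {t. t \<subseteq> s \<and> card t = l + 1}"

definition vertices :: "'v set set \<Rightarrow> 'v set" where
  "vertices K = \<Union>K"

definition realization :: "'v set set \<Rightarrow> ('v \<Rightarrow> real) topology" where
  "realization K = subtopology (powertop_real UNIV)
     {x. (\<forall>i. 0 \<le> x i) \<and> (\<exists>f\<in>K. (\<forall>i. i \<notin> f \<longrightarrow> x i = 0) \<and> sum x f = 1)}"

definition proper_coloring :: "nat \<Rightarrow> 'v set set \<Rightarrow> ('v \<Rightarrow> nat) \<Rightarrow> bool" where
  "proper_coloring d K col \<longleftrightarrow>
     (\<forall>v\<in>vertices K. col v \<le> d) \<and>
     (\<forall>x y. x \<noteq> y \<and> (\<exists>f\<in>K. {x, y} \<subseteq> f) \<longrightarrow> col x \<noteq> col y)"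

text \<open>For d \<ge> 1 the decomposition into colorable d-balls is a finite set of pairs
(v, K'): the ball is {v * delta | delta \<in> K'} with boundary K', where K' is a (d-1)-colex
homeomorphic to the (d-1)-sphere and v is not a vertex of K'.\<close>
fun colex :: "nat \<Rightarrow> 'v set set \<Rightarrow> bool" where
  "colex 0 K \<longleftrightarrow> finite K \<and> (\<forall>f\<in>K. card f = 1)"
| "colex (Suc n) K \<longleftrightarrow>
     finite K \<and> (\<forall>f\<in>K. card f = n + 2) \<and>
     (\<exists>Bs :: ('v \<times> 'v set set) set.
        finite Bs \<and>
        (\<forall>(v, K')\<in>Bs. colex n K' \<and> realization K' homeomorphic_space nsphere n
                        \<and> v \<notin> vertices K') \<and>
        K = (\<Union>(v, K')\<in>Bs. insert v ` K') \<and>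
        (\<forall>b1\<in>Bs. \<forall>b2\<in>Bs. b1 \<noteq> b2 \<longrightarrow>
           insert (fst b1) ` snd b1 \<inter> insert (fst b2) ` snd b2 = {}) \<and>
        (\<forall>\<sigma>\<in>(\<Union>b\<in>Bs. snd b). card {b\<in>Bs. \<sigma> \<in> snd b} = 2)) \<and>
     (\<exists>col. proper_coloring (Suc n) K col)"

definition colorable_ball_at :: "nat \<Rightarrow> 'v \<Rightarrow> 'v set set \<Rightarrow> bool" where
  "colorable_ball_at d v B \<longleftrightarrow> (\<exists>K'. colex (d - 1) K' \<and>
      realization K' homeomorphic_space nsphere (d - 1) \<and> v \<notin> vertices K' \<and>
      B = insert v ` K')"

definition Star :: "'v set set \<Rightarrow> nat \<Rightarrow> 'v set \<Rightarrow> 'v set set" where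
  "Star K n \<kappa> = {\<nu>\<in>simplices K n. \<kappa> \<subseteq> \<nu>}"

definition Link :: "'v set set \<Rightarrow> nat \<Rightarrow> 'v set \<Rightarrow> 'v set set" where
  "Link K n \<kappa> = {\<nu>\<in>simplices K n. \<nu> \<inter> \<kappa> = {} \<and> (\<exists>f\<in>K. \<nu> \<subseteq> f \<and> \<kappa> \<subseteq> f)}"

definition lin :: "('a \<Rightarrow> 'b set) \<Rightarrow> 'a set \<Rightarrow> 'b set" where
  "lin g c = {y. odd (card {x\<in>c. y \<in> g x})}"

definition gbd :: "'v set set \<Rightarrow> nat \<Rightarrow> nat \<Rightarrow> 'v set \<Rightarrow> 'v set set" where
  "gbd K j n \<kappa> = (if n < j then faces n \<kappa> else if j < n then Star K n \<kappa> else {})"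

text \<open>(k+1)-cells of the restricted lattice: formal symbols Xi(delta).\<close>
datatype 'v xi_cell = Xi "'v set"

definition pi0 :: "('v \<Rightarrow> nat) \<Rightarrow> nat set \<Rightarrow> 'v set \<Rightarrow> 'v set set" where
  "pi0 col C \<mu> = (if col ` \<mu> \<subseteq> C then {\<mu>} else {})"

definition restr :: "('v \<Rightarrow> nat) \<Rightarrow> nat \<Rightarrow> nat set \<Rightarrow> 'v set \<Rightarrow> 'v set" where
  "restr col k C \<delta> = (THE \<mu>. \<mu> \<in> faces k \<delta> \<and> col ` \<mu> = C)"

definition pi1 :: "('v \<Rightarrow> nat) \<Rightarrow> nat \<Rightarrow> nat set \<Rightarrow> 'v set \<Rightarrow> 'v set set" where
  "pi1 col k C \<delta> = {restr col k C \<delta>}"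

definition pi2 :: "('v \<Rightarrow> nat) \<Rightarrow> nat \<Rightarrow> nat set \<Rightarrow> 'v set \<Rightarrow> 'v xi_cell set" where
  "pi2 col d C \<nu> = (if col ` \<nu> = {0..d} - C then {Xi \<nu>} else {})"

definition bdC :: "nat \<Rightarrow> 'v set \<Rightarrow> 'v set set" where
  "bdC i \<iota> = faces (i - 1) \<iota>"

definition bdC_top :: "'v set set \<Rightarrow> nat \<Rightarrow> 'v xi_cell \<Rightarrow> 'v set set" where
  "bdC_top K k x = (case x of Xi \<delta> \<Rightarrow> Link K k \<delta>)"

end

theory Submission
  imports Defs
begin

text \<open>The first square commutes facet by facet: the \<open>(k-1)\<close>-faces of a facet \<open>\<delta>\<close> whose colours
lie in \<open>C\<close> are exactly the \<open>(k-1)\<close>-faces of \<open>\<delta>|\<^sub>C\<close>.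
For the second square one sums \<open>\<delta>|\<^sub>C\<close> over the facets \<open>\<delta>\<close> containing a \<open>(d-k-1)\<close>-simplex \<open>\<nu>\<close>.
If \<open>\<nu>\<close> carries exactly the colours outside \<open>C\<close>, then \<open>\<delta>|\<^sub>C = \<delta> - \<nu>\<close> and \<open>\<delta> \<mapsto> \<delta> - \<nu>\<close> is a
bijection onto \<open>Link\<^sub>k(\<nu>)\<close>. Otherwise the facets with \<open>\<delta>|\<^sub>C = \<mu>\<close> are those containing
\<open>\<nu> \<union> \<mu>\<close>, a simplex missing some colour \<open>c\<close>; deleting the \<open>c\<close>-coloured vertex groups these facets
by the ridge they contain, and every ridge of a colex lies in an even number of facets. The
latter is proved by induction on the dimension through the decomposition into cones over
spheres, the base case being that a \<open>0\<close>-sphere consists of two points.\<close>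

section \<open>Chains over \<open>\<bbbF>\<^sub>2\<close>\<close>

lemma lin_cong:
  assumes "\<And>x. x \<in> c \<Longrightarrow> g x = h x"
  shows "lin g c = lin h c"
proof -
  have "{x\<in>c. y \<in> g x} = {x\<in>c. y \<in> h x}" for y
    using assms by auto
  then show ?thesis
    by (simp add: lin_def)
qed

lemma lin_empty: "lin g {} = {}"
  by (simp add: lin_def)

lemma lin_single: "lin g {a} = g a"
proof -
  have "{x\<in>{a}. y \<in> g x} = (if y \<in> g a then {a} else {})" for y
    by auto
  then show ?thesis
    unfolding lin_def by auto
qed

lemma lin_singleton_valued: "lin (\<lambda>x. {h x}) A = {y. odd (card {x\<in>A. h x = y})}"
  unfolding lin_def by (simp add: eq_commute)

lemma lin_singleton_valued_inj_on:
  assumes "inj_on h A"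
  shows "lin (\<lambda>x. {h x}) A = h ` A"
proof -
  have "{x\<in>A. h x = y} = (if y \<in> h ` A then {the_inv_into A h y} else {})" for y
    using assms by (auto simp: the_inv_into_f_f inj_on_eq_iff)
  then show ?thesis
    unfolding lin_singleton_valued by auto
qed

lemma lin_compose:
  assumes c: "finite c" and g: "\<And>x. x \<in> c \<Longrightarrow> finite (g x)"
  shows "lin f (lin g c) = lin (\<lambda>x. lin f (g x)) c"
proof (rule set_eqI)
  fix y
  define Z where "Z = {z \<in> \<Union>(g ` c). y \<in> f z}"
  have Z: "finite Z"
    using c g by (auto simp: Z_def)
  have "(\<Sum>z\<in>Z. card {x\<in>c. z \<in> g x}) = (\<Sum>z\<in>Z. \<Sum>x\<in>c. of_bool (z \<in> g x))"
    using c by (simp add: Int_def)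
  \<comment> \<open>both sides count, mod 2, the pairs \<open>(x, z)\<close> with \<open>z \<in> g x\<close> and \<open>y \<in> f z\<close>\<close>
  also have "\<dots> = (\<Sum>x\<in>c. \<Sum>z\<in>Z. of_bool (z \<in> g x))"
    by (rule sum.swap)
  also have "\<dots> = (\<Sum>x\<in>c. card {z\<in>g x. y \<in> f z})"
    using Z by (intro sum.cong refl) (auto simp: Z_def intro!: arg_cong[where f = card])
  finally have "even (card {z\<in>Z. odd (card {x\<in>c. z \<in> g x})})
      \<longleftrightarrow> even (card {x\<in>c. odd (card {z\<in>g x. y \<in> f z})})"
    by (simp only: even_sum_iff[OF Z, symmetric] even_sum_iff[OF c, symmetric])
  moreover have "{z\<in>Z. odd (card {x\<in>c. z \<in> g x})} = {z\<in>lin g c. y \<in> f z}"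
    unfolding Z_def lin_def by (auto dest: odd_card_imp_not_empty)
  ultimately show "y \<in> lin f (lin g c) \<longleftrightarrow> y \<in> lin (\<lambda>x. lin f (g x)) c"
    by (simp add: lin_def)
qed

lemma lin_compose_commute:
  assumes "finite c"
    and "\<And>x. x \<in> c \<Longrightarrow> finite (g x)" "\<And>x. x \<in> c \<Longrightarrow> finite (p x)"
    and "\<And>x. x \<in> c \<Longrightarrow> lin f (g x) = lin h (p x)"
  shows "lin f (lin g c) = lin h (lin p c)"
  using assms by (simp add: lin_compose cong: lin_cong)

lemma lin_pi0: "lin (pi0 col C) A = {\<mu>\<in>A. col ` \<mu> \<subseteq> C}"
proof -
  have "{x\<in>A. \<mu> \<in> pi0 col C x} = (if \<mu> \<in> A \<and> col ` \<mu> \<subseteq> C then {\<mu>} else {})" for \<mu>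
    by (auto simp: pi0_def)
  then show ?thesis
    unfolding lin_def by auto
qed

section \<open>Ridges of a colex lie in an even number of facets\<close>

lemma colex_card_facet: "colex n K \<Longrightarrow> f \<in> K \<Longrightarrow> card f = Suc n"
  by (cases n) auto

lemma colex_finite: "colex n K \<Longrightarrow> finite K"
  by (cases n) auto

lemma card_topspace_nsphere_0: "card (topspace (nsphere 0)) = 2"
proof -
  define e :: "real \<Rightarrow> nat \<Rightarrow> real" where "e t i = (if i = 0 then t else 0)" for t i
  have "topspace (nsphere 0) = {e 1, e (-1)}"
    by (auto simp: nsphere e_def fun_eq_iff power2_eq_1_iff split: if_split_asm)
  moreover have "e 1 \<noteq> e (-1)"
    by (auto simp: e_def fun_eq_iff)
  ultimately show ?thesis
    by simp
qed

lemma topspace_realization_colex_0: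
  fixes K :: "'v set set"
  assumes "colex 0 K"
  shows "topspace (realization K) = (\<lambda>f. indicator f :: 'v \<Rightarrow> real) ` K"
proof -
  have singleton: "\<exists>a. f = {a}" if "f \<in> K" for f
    using assms that by (simp add: card_1_singleton_iff)
  show ?thesis
  proof (intro set_eqI iffI)
    fix x :: "'v \<Rightarrow> real"
    assume "x \<in> topspace (realization K)"
    then obtain f where f: "f \<in> K" "\<forall>i. i \<notin> f \<longrightarrow> x i = 0" "sum x f = 1"
      by (auto simp: realization_def)
    moreover obtain a where "f = {a}"
      using singleton f(1) by blast
    ultimately have "x = indicator f"
      by (auto simp: fun_eq_iff indicator_def)
    then show "x \<in> (\<lambda>f. indicator f) ` K"
      using f(1) by blast
  next
    fix x :: "'v \<Rightarrow> real"
    assume "x \<in> (\<lambda>f. indicator f) ` K"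
    then obtain f a where "f \<in> K" "x = indicator f" "f = {a}"
      using singleton by blast
    then show "x \<in> topspace (realization K)"
      by (auto simp: realization_def indicator_def intro!: bexI[of _ f])
  qed
qed

lemma card_colex_0_sphere:
  fixes K :: "'v set set"
  assumes K: "colex 0 K" and sphere: "realization K homeomorphic_space nsphere 0"
  shows "card K = 2"
proof -
  obtain h where h: "homeomorphic_map (realization K) (nsphere 0) h"
    using sphere homeomorphic_space by blast
  have "card (topspace (realization K)) = card (topspace (nsphere 0))"
    using homeomorphic_imp_injective_map[OF h] homeomorphic_imp_surjective_map[OF h]
    by (metis card_image)
  moreover have "inj_on (\<lambda>f. indicator f :: 'v \<Rightarrow> real) K"
    by (rule inj_onI) (metis indicator_eq_1_iff subsetI subset_antisym)
  ultimately show ?thesis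
    using card_topspace_nsphere_0 by (simp add: topspace_realization_colex_0[OF K] card_image)
qed

lemma odd_card_cone_cofaces_iff:
  assumes v: "v \<notin> vertices K" and card_K: "\<And>\<tau>. \<tau> \<in> K \<Longrightarrow> card \<tau> = Suc n"
    and card_\<sigma>: "card \<sigma> = Suc n"
    and link: "v \<in> \<sigma> \<Longrightarrow> even (card {\<tau>\<in>K. \<sigma> - {v} \<subseteq> \<tau>})"
  shows "odd (card {f \<in> insert v ` K. \<sigma> \<subseteq> f}) \<longleftrightarrow> \<sigma> \<in> K"
proof -
  have "inj_on (insert v) K"
    using v by (intro inj_onI) (metis Union_iff insert_ident vertices_def)
  then have "inj_on (insert v) {\<tau>\<in>K. \<sigma> \<subseteq> insert v \<tau>}"
    by (rule inj_on_subset) blast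
  moreover have "{f \<in> insert v ` K. \<sigma> \<subseteq> f} = insert v ` {\<tau>\<in>K. \<sigma> \<subseteq> insert v \<tau>}"
    by blast
  ultimately have card_eq: "card {f \<in> insert v ` K. \<sigma> \<subseteq> f} = card {\<tau>\<in>K. \<sigma> \<subseteq> insert v \<tau>}"
    by (simp add: card_image)
  show ?thesis
  proof (cases "v \<in> \<sigma>")
    case True
    then have "{\<tau>\<in>K. \<sigma> \<subseteq> insert v \<tau>} = {\<tau>\<in>K. \<sigma> - {v} \<subseteq> \<tau>}" and "\<sigma> \<notin> K"
      using v by (auto simp: vertices_def)
    then show ?thesis
      using card_eq link True by simp
  next
    case False
    have "\<tau> = \<sigma>" if "\<tau> \<in> K" "\<sigma> \<subseteq> \<tau>" for \<tau>
      using that card_K[OF that(1)] card_\<sigma>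
      by (metis card_subset_eq card.infinite nat.distinct(1))
    then have "{\<tau>\<in>K. \<sigma> \<subseteq> insert v \<tau>} = K \<inter> {\<sigma>}"
      using False by blast
    then have "card {f \<in> insert v ` K. \<sigma> \<subseteq> f} = card (K \<inter> {\<sigma>})"
      using card_eq by simp
    then show ?thesis
      by (cases "\<sigma> \<in> K") simp_all
  qed
qed

lemma card_cofaces_disjoint_UN:
  assumes "finite I" and "\<And>i. i \<in> I \<Longrightarrow> finite (F i)"
    and "\<And>i j. i \<in> I \<Longrightarrow> j \<in> I \<Longrightarrow> i \<noteq> j \<Longrightarrow> F i \<inter> F j = {}"
  shows "card {f \<in> (\<Union>i\<in>I. F i). \<sigma> \<subseteq> f} = (\<Sum>i\<in>I. card {f \<in> F i. \<sigma> \<subseteq> f})"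
proof -
  have "{f \<in> (\<Union>i\<in>I. F i). \<sigma> \<subseteq> f} = (\<Union>i\<in>I. {f \<in> F i. \<sigma> \<subseteq> f})"
    by blast
  also have "card \<dots> = (\<Sum>i\<in>I. card {f \<in> F i. \<sigma> \<subseteq> f})"
    by (rule card_UN_disjoint) (use assms in auto)
  finally show ?thesis .
qed

lemma even_cofaces_colex_Suc:
  fixes K :: "'v set set"
  assumes K: "colex (Suc n) K" and card_\<sigma>: "card \<sigma> = Suc n"
    and sphere_IH: "\<And>(L :: 'v set set) \<rho>. colex n L \<Longrightarrow> realization L homeomorphic_space nsphere n
                      \<Longrightarrow> card \<rho> = n \<Longrightarrow> even (card {\<tau>\<in>L. \<rho> \<subseteq> \<tau>})"
  shows "even (card {f\<in>K. \<sigma> \<subseteq> f})"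
proof -
  obtain Bs :: "('v \<times> 'v set set) set" where
    Bs: "finite Bs"
    and balls: "\<forall>(v, L)\<in>Bs. colex n L \<and> realization L homeomorphic_space nsphere n \<and> v \<notin> vertices L"
    and K_eq: "K = (\<Union>(v, L)\<in>Bs. insert v ` L)"
    and disjoint: "\<forall>b1\<in>Bs. \<forall>b2\<in>Bs. b1 \<noteq> b2 \<longrightarrow> insert (fst b1) ` snd b1 \<inter> insert (fst b2) ` snd b2 = {}"
    and two: "\<forall>\<rho>\<in>(\<Union>b\<in>Bs. snd b). card {b\<in>Bs. \<rho> \<in> snd b} = 2"
    using K by auto
  have ball: "colex n L" "realization L homeomorphic_space nsphere n" "v \<notin> vertices L"
    if "(v, L) \<in> Bs" for v L
    using balls that by auto
  define cofaces where "cofaces b = {f \<in> insert (fst b) ` snd b. \<sigma> \<subseteq> f}" for b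
  have K_cones: "K = (\<Union>b\<in>Bs. insert (fst b) ` snd b)"
    using K_eq by (auto simp: case_prod_beta)
  have finite_cones: "finite (insert (fst b) ` snd b)" if "b \<in> Bs" for b
    using that ball(1) colex_finite by (metis finite_imageI prod.collapse)
  have "card {f\<in>K. \<sigma> \<subseteq> f} = (\<Sum>b\<in>Bs. card (cofaces b))"
    unfolding K_cones cofaces_def
    by (rule card_cofaces_disjoint_UN[OF Bs]) (use finite_cones disjoint in auto)
  then have "even (card {f\<in>K. \<sigma> \<subseteq> f}) \<longleftrightarrow> even (card {b\<in>Bs. odd (card (cofaces b))})"
    by (simp only: even_sum_iff[OF Bs])
  also have "{b\<in>Bs. odd (card (cofaces b))} = {b\<in>Bs. \<sigma> \<in> snd b}"
  proof (rule Collect_cong, rule conj_cong[OF refl])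
    fix b assume "b \<in> Bs"
    moreover obtain v L where b: "b = (v, L)"
      by fastforce
    ultimately have L: "colex n L" "realization L homeomorphic_space nsphere n" "v \<notin> vertices L"
      using ball by auto
    have "even (card {\<tau>\<in>L. \<sigma> - {v} \<subseteq> \<tau>})" if "v \<in> \<sigma>"
      using sphere_IH[OF L(1,2)] that card_\<sigma> by simp
    then show "odd (card (cofaces b)) \<longleftrightarrow> \<sigma> \<in> snd b"
      unfolding cofaces_def b using odd_card_cone_cofaces_iff[OF L(3) colex_card_facet[OF L(1)] card_\<sigma>]
      by simp
  qed
  also have "even (card {b\<in>Bs. \<sigma> \<in> snd b})"
  proof (cases "\<sigma> \<in> (\<Union>b\<in>Bs. snd b)")
    case True
    then have "card {b\<in>Bs. \<sigma> \<in> snd b} = 2"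
      using two by blast
    then show ?thesis
      by simp
  next
    case False
    then have no_ball: "{b\<in>Bs. \<sigma> \<in> snd b} = {}"
      by blast
    show ?thesis
      unfolding no_ball by simp
  qed
  finally show ?thesis .
qed

lemma even_cofaces_colex_sphere:
  fixes K :: "'v set set"
  assumes "colex n K" and "realization K homeomorphic_space nsphere n" and "card \<sigma> = n"
  shows "even (card {\<tau>\<in>K. \<sigma> \<subseteq> \<tau>})"
  using assms
proof (induction n arbitrary: K \<sigma>)
  case 0
  show ?case
  proof (cases "\<sigma> = {}")
    case True
    then show ?thesis
      using card_colex_0_sphere[OF "0.prems"(1,2)] by simp
  next
    case False
    then have "infinite \<sigma>"
      using "0.prems"(3) by auto
    then have no_cofaces: "{\<tau>\<in>K. \<sigma> \<subseteq> \<tau>} = {}"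
      using colex_card_facet[OF "0.prems"(1)] by (metis (mono_tags, lifting) Collect_empty_eq
          card.infinite finite_subset nat.distinct(1))
    show ?thesis
      unfolding no_cofaces by simp
  qed
next
  case (Suc n)
  then show ?case
    using even_cofaces_colex_Suc by blast
qed

lemma even_cofaces_colex:
  "colex (Suc n) K \<Longrightarrow> card \<sigma> = Suc n \<Longrightarrow> even (card {f\<in>K. \<sigma> \<subseteq> f})"
  using even_cofaces_colex_Suc even_cofaces_colex_sphere by blast

section \<open>Colored colexes\<close>

lemma dvd_card_if_dvd_fibres:
  assumes "finite A" and "\<And>a. a \<in> A \<Longrightarrow> k dvd card {b\<in>A. g b = g a}"
  shows "k dvd card A"
proof -
  have "A = \<Union>((\<lambda>a. {b\<in>A. g b = g a}) ` A)"
    by blast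
  also have "k dvd card \<dots>"
    by (rule dvd_partition) (use assms in auto)
  finally show ?thesis .
qed

lemma inj_on_filter_image_eq_iff:
  assumes "inj_on col f"
  shows "{x\<in>f. col x \<in> col ` \<mu>} = \<mu> \<longleftrightarrow> \<mu> \<subseteq> f"
  using assms by (auto simp: inj_on_def)

locale colored_colex =
  fixes d :: nat and K :: "'v set set" and col :: "'v \<Rightarrow> nat"
  assumes colex: "colex d K" and coloring: "proper_coloring d K col"
begin

lemma finite_facets: "finite K"
  using colex colex_finite by blast

lemma card_facet: "f \<in> K \<Longrightarrow> card f = Suc d"
  using colex colex_card_facet by blast

lemma finite_facet: "f \<in> K \<Longrightarrow> finite f"
  using card_facet card.infinite by force

lemma inj_on_col_facet: "f \<in> K \<Longrightarrow> inj_on col f"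
  using coloring by (auto simp: proper_coloring_def inj_on_def)

lemma col_facet:
  assumes "f \<in> K"
  shows "col ` f = {0..d}"
proof (rule card_subset_eq)
  show "col ` f \<subseteq> {0..d}"
    using coloring assms by (auto simp: proper_coloring_def vertices_def)
  show "card (col ` f) = card {0..d}"
    using assms by (simp add: card_image inj_on_col_facet card_facet)
qed simp

lemma simplices_top: "simplices K d = K"
proof (intro set_eqI iffI)
  fix s assume "s \<in> simplices K d"
  then obtain f where "f \<in> K" "s \<subseteq> f" "card s = card f"
    by (auto simp: simplices_def card_facet)
  then show "s \<in> K"
    using card_subset_eq finite_facet by metis
qed (auto simp: simplices_def card_facet)

lemma finite_simplices: "finite (simplices K m)"
proof (rule finite_subset)
  show "simplices K m \<subseteq> Pow (\<Union>K)"
    by (auto simp: simplices_def)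
  show "finite (Pow (\<Union>K))"
    using finite_facets finite_facet by blast
qed

lemma restr_facet:
  assumes f: "f \<in> K" and C: "C \<subseteq> {0..d}" "card C = k + 1"
  shows "restr col k C f = {x\<in>f. col x \<in> C}"
  unfolding restr_def
proof (rule the_equality)
  have inj: "inj_on col {x\<in>f. col x \<in> C}"
    using inj_on_col_facet[OF f] by (rule inj_on_subset) blast
  have col: "col ` {x\<in>f. col x \<in> C} = C"
    using col_facet[OF f] C(1) by auto
  then have "card {x\<in>f. col x \<in> C} = k + 1"
    using card_image[OF inj] C(2) by simp
  with col show "{x\<in>f. col x \<in> C} \<in> faces k f \<and> col ` {x\<in>f. col x \<in> C} = C"
    by (auto simp: faces_def)
next
  fix \<mu> assume "\<mu> \<in> faces k f \<and> col ` \<mu> = C"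
  then show "\<mu> = {x\<in>f. col x \<in> C}"
    using inj_on_filter_image_eq_iff[OF inj_on_col_facet[OF f]] by (auto simp: faces_def)
qed

lemma even_cofaces_missing_color:
  assumes d: "0 < d" and c: "c \<le> d" "c \<notin> col ` \<tau>"
  shows "even (card {f\<in>K. \<tau> \<subseteq> f})"
proof (rule dvd_card_if_dvd_fibres)
  define ridge where "ridge f = {x\<in>f. col x \<in> {0..d} - {c}}" for f
  show "finite {f\<in>K. \<tau> \<subseteq> f}"
    using finite_facets by simp
  fix f1 assume f1: "f1 \<in> {f\<in>K. \<tau> \<subseteq> f}"
  then have f1K: "f1 \<in> K" by simp
  have "col ` ridge f1 = col ` f1 \<inter> ({0..d} - {c})"
    by (auto simp: ridge_def)
  then have col_ridge: "col ` ridge f1 = {0..d} - {c}"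
    using col_facet[OF f1K] by blast
  have "ridge f = ridge f1 \<longleftrightarrow> ridge f1 \<subseteq> f" if "f \<in> K" for f
    using inj_on_filter_image_eq_iff[OF inj_on_col_facet[OF that], of "ridge f1"] col_ridge
    by (simp add: ridge_def)
  moreover have "\<tau> \<subseteq> ridge f1"
  proof
    fix x assume "x \<in> \<tau>"
    then have "x \<in> f1" "col x \<noteq> c"
      using f1 c(2) by auto
    moreover have "col x \<in> {0..d}"
      using \<open>x \<in> f1\<close> col_facet[OF f1K] by blast
    ultimately show "x \<in> ridge f1"
      by (simp add: ridge_def)
  qed
  ultimately have "{f\<in>{f\<in>K. \<tau> \<subseteq> f}. ridge f = ridge f1} = {f\<in>K. ridge f1 \<subseteq> f}"
    by blast
  moreover have "card (ridge f1) = d"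
  proof -
    have "inj_on col (ridge f1)"
      using inj_on_col_facet[OF f1K] by (rule inj_on_subset) (auto simp: ridge_def)
    then have "card (ridge f1) = card ({0..d} - {c})"
      using col_ridge card_image by fastforce
    then show ?thesis
      using c by simp
  qed
  moreover obtain n where "d = Suc n"
    using d gr0_implies_Suc by blast
  ultimately show "2 dvd card {f\<in>{f\<in>K. \<tau> \<subseteq> f}. ridge f = ridge f1}"
    using even_cofaces_colex colex by simp
qed

lemma finite_gbd: "finite \<kappa> \<Longrightarrow> finite (gbd K j n \<kappa>)"
  using finite_simplices[of n] by (auto simp: gbd_def faces_def Star_def)

lemma pi0_gbd_facet:
  assumes \<delta>: "\<delta> \<in> K" and C: "C \<subseteq> {0..d}" "card C = k + 1" and k: "k < d"
  shows "lin (pi0 col C) (gbd K d (k - 1) \<delta>) = lin (bdC k) (pi1 col k C \<delta>)"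
proof -
  have "gbd K d (k - 1) \<delta> = faces (k - 1) \<delta>"
    using k by (auto simp: gbd_def)
  then have "lin (pi0 col C) (gbd K d (k - 1) \<delta>) = {\<mu>\<in>faces (k - 1) \<delta>. col ` \<mu> \<subseteq> C}"
    by (simp add: lin_pi0)
  also have "\<dots> = faces (k - 1) {x\<in>\<delta>. col x \<in> C}"
    by (auto simp: faces_def)
  also have "\<dots> = lin (bdC k) (pi1 col k C \<delta>)"
    by (simp add: pi1_def lin_single bdC_def restr_facet[OF \<delta> C])
  finally show ?thesis .
qed

lemma pi1_cofaces_complement:
  assumes C: "C \<subseteq> {0..d}" "card C = k + 1" and k: "k < d"
    and \<nu>: "\<nu> \<in> simplices K (d - k - 1)" and col_\<nu>: "col ` \<nu> = {0..d} - C"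
  shows "lin (pi1 col k C) {f\<in>K. \<nu> \<subseteq> f} = Link K k \<nu>"
proof -
  have card_\<nu>: "card \<nu> = d - k"
    using \<nu> k by (simp add: simplices_def)
  have restr: "restr col k C f = f - \<nu>" if f: "f \<in> K" "\<nu> \<subseteq> f" for f
  proof -
    have "x \<in> \<nu> \<longleftrightarrow> col x \<notin> C" if "x \<in> f" for x
      using inj_on_image_mem_iff[OF inj_on_col_facet[OF f(1)] that f(2)] col_\<nu>
        col_facet[OF f(1)] that by blast
    then show ?thesis
      using restr_facet[OF f(1) C] by blast
  qed
  have "lin (pi1 col k C) {f\<in>K. \<nu> \<subseteq> f} = lin (\<lambda>f. {f - \<nu>}) {f\<in>K. \<nu> \<subseteq> f}"
    by (rule lin_cong) (simp add: pi1_def restr)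
  also have "\<dots> = (\<lambda>f. f - \<nu>) ` {f\<in>K. \<nu> \<subseteq> f}"
    by (rule lin_singleton_valued_inj_on) (auto simp: inj_on_def)
  also have "\<dots> = Link K k \<nu>"
  proof (intro set_eqI iffI)
    fix \<mu> assume "\<mu> \<in> (\<lambda>f. f - \<nu>) ` {f\<in>K. \<nu> \<subseteq> f}"
    then obtain f where f: "f \<in> K" "\<nu> \<subseteq> f" and \<mu>: "\<mu> = f - \<nu>"
      by blast
    then have "card \<mu> = k + 1"
      using card_facet[OF f(1)] card_\<nu> k by (simp add: card_Diff_subset finite_subset[OF _ finite_facet])
    then show "\<mu> \<in> Link K k \<nu>"
      using f \<mu> by (auto simp: Link_def simplices_def)
  next
    fix \<mu> assume "\<mu> \<in> Link K k \<nu>"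
    then obtain f where \<mu>: "card \<mu> = k + 1" "\<mu> \<inter> \<nu> = {}" and f: "f \<in> K" "\<mu> \<subseteq> f" "\<nu> \<subseteq> f"
      by (auto simp: Link_def simplices_def)
    have "finite \<mu>" "finite \<nu>"
      using f finite_facet finite_subset by blast+
    then have "card (\<nu> \<union> \<mu>) = card f"
      using \<mu> card_\<nu> card_facet[OF f(1)] k by (simp add: card_Un_disjoint Int_commute)
    then have "\<nu> \<union> \<mu> = f"
      using f card_subset_eq[OF finite_facet[OF f(1)]] by blast
    then show "\<mu> \<in> (\<lambda>f. f - \<nu>) ` {f\<in>K. \<nu> \<subseteq> f}"
      using \<mu>(2) f(1) by blast
  qed
  finally show ?thesis .
qed

lemma pi1_cofaces_not_complement:
  assumes C: "C \<subseteq> {0..d}" "card C = k + 1" and k: "k < d"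
    and \<nu>: "\<nu> \<in> simplices K (d - k - 1)" and col_\<nu>: "col ` \<nu> \<noteq> {0..d} - C"
  shows "lin (pi1 col k C) {f\<in>K. \<nu> \<subseteq> f} = {}"
proof -
  have "even (card {f\<in>{f\<in>K. \<nu> \<subseteq> f}. restr col k C f = \<mu>})" for \<mu>
  proof (cases "\<exists>f0\<in>K. \<nu> \<subseteq> f0 \<and> restr col k C f0 = \<mu>")
    case False
    then have no_fibre: "{f\<in>{f\<in>K. \<nu> \<subseteq> f}. restr col k C f = \<mu>} = {}"
      by blast
    show ?thesis
      unfolding no_fibre by simp
  next
    case True
    then obtain f0 where f0: "f0 \<in> K" "\<nu> \<subseteq> f0" "\<mu> = {x\<in>f0. col x \<in> C}"
      using restr_facet[OF _ C] by blast
    have col_\<mu>: "col ` \<mu> = C"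
      using col_facet[OF f0(1)] C(1) f0(3) by auto
    have "restr col k C f = \<mu> \<longleftrightarrow> \<mu> \<subseteq> f" if "f \<in> K" for f
      using inj_on_filter_image_eq_iff[OF inj_on_col_facet[OF that], of \<mu>] restr_facet[OF that C] col_\<mu>
      by simp
    then have fibre: "{f\<in>{f\<in>K. \<nu> \<subseteq> f}. restr col k C f = \<mu>} = {f\<in>K. \<nu> \<union> \<mu> \<subseteq> f}"
      by blast
    have "\<not> {0..d} - C \<subseteq> col ` \<nu>"
    proof
      assume sub: "{0..d} - C \<subseteq> col ` \<nu>"
      have "card (col ` \<nu>) = card \<nu>"
        using inj_on_subset[OF inj_on_col_facet[OF f0(1)] f0(2)] by (rule card_image)
      also have "\<dots> = card ({0..d} - C)"
        using \<nu> k C by (simp add: simplices_def card_Diff_subset finite_subset)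
      finally have "{0..d} - C = col ` \<nu>"
        using sub by (metis card_subset_eq finite_imageI finite_subset[OF f0(2) finite_facet[OF f0(1)]])
      with col_\<nu> show False
        by simp
    qed
    then obtain c where "c \<le> d" "c \<notin> col ` (\<nu> \<union> \<mu>)"
      using col_\<mu> by (auto simp: subset_iff)
    then show ?thesis
      unfolding fibre using k by (intro even_cofaces_missing_color) auto
  qed
  moreover have "pi1 col k C = (\<lambda>f. {restr col k C f})"
    by (simp add: fun_eq_iff pi1_def)
  ultimately show ?thesis
    by (simp add: lin_singleton_valued)
qed

lemma pi1_gbd_cofaces:
  assumes C: "C \<subseteq> {0..d}" "card C = k + 1" and k: "k < d"
    and \<nu>: "\<nu> \<in> simplices K (d - k - 1)"
  shows "lin (pi1 col k C) (gbd K (d - k - 1) d \<nu>) = lin (bdC_top K k) (pi2 col d C \<nu>)"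
proof -
  have "gbd K (d - k - 1) d \<nu> = {f\<in>K. \<nu> \<subseteq> f}"
    using k by (auto simp: gbd_def Star_def simplices_top)
  then show ?thesis
    using pi1_cofaces_complement[OF C k \<nu>] pi1_cofaces_not_complement[OF C k \<nu>]
    by (simp add: pi2_def lin_single lin_empty bdC_top_def)
qed

end

theorem lemma5:
  fixes K :: "'v set set" and col :: "'v \<Rightarrow> nat" and d k :: nat and C :: "nat set"
  assumes colex: "colex d K"
    and coloring: "proper_coloring d K col"
    and standing: "\<forall>v\<in>vertices K. colorable_ball_at d v {f\<in>K. v \<in> f}"
    and k1: "1 \<le> k" and kd: "k < d"
    and C: "C \<subseteq> {0..d}" "card C = k + 1"
  shows "(\<forall>c \<subseteq> simplices K d.
           lin (pi0 col C) (lin (gbd K d (k - 1)) c) = lin (bdC k) (lin (pi1 col k C) c)) \<and>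
         (\<forall>c \<subseteq> simplices K (d - k - 1).
           lin (pi1 col k C) (lin (gbd K (d - k - 1) d) c) = lin (bdC_top K k) (lin (pi2 col d C) c))"
proof -
  interpret colored_colex d K col
    using colex coloring by unfold_locales
  have finite_chain: "finite c" if "c \<subseteq> simplices K m" for c m
    using that finite_simplices finite_subset by blast
  have "lin (pi0 col C) (lin (gbd K d (k - 1)) c) = lin (bdC k) (lin (pi1 col k C) c)"
    if c: "c \<subseteq> simplices K d" for c
  proof (rule lin_compose_commute)
    show "finite c"
      using c by (rule finite_chain)
    show "finite (gbd K d (k - 1) \<delta>)" if "\<delta> \<in> c" for \<delta>
      using that c simplices_top finite_facet finite_gbd by blast
    show "finite (pi1 col k C \<delta>)" for \<delta>
      by (simp add: pi1_def)
    show "lin (pi0 col C) (gbd K d (k - 1) \<delta>) = lin (bdC k) (pi1 col k C \<delta>)" if "\<delta> \<in> c" for \<delta>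
      using that c simplices_top pi0_gbd_facet[OF _ C kd] by blast
  qed
  moreover have "lin (pi1 col k C) (lin (gbd K (d - k - 1) d) c) = lin (bdC_top K k) (lin (pi2 col d C) c)"
    if c: "c \<subseteq> simplices K (d - k - 1)" for c
  proof (rule lin_compose_commute)
    show "finite c"
      using c by (rule finite_chain)
    show "finite (gbd K (d - k - 1) d \<nu>)" for \<nu>
      using finite_simplices by (simp add: gbd_def Star_def)
    show "finite (pi2 col d C \<nu>)" for \<nu>
      by (simp add: pi2_def)
    show "lin (pi1 col k C) (gbd K (d - k - 1) d \<nu>) = lin (bdC_top K k) (pi2 col d C \<nu>)"
      if "\<nu> \<in> c" for \<nu>
      using that c pi1_gbd_cofaces[OF C kd] by blast
  qed
  ultimately show ?thesis
    by blast
qed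

end
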